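(* In the setting below, the intersection $\bigcap_{\nu\subseteq\{0,\dots,n\},|\nu|=n}\mathrm{Im}(P^\pi_\nu)$ is the space of all constant maps $\phi\equiv x_0$ on $X(n)$ where $x_0\in\mathbb{E}$ is a fixed point of $\pi(G)$ (i.e. $\pi(g)x_0=x_0$ for all $g\in G$).
   Context: Setting: $X$ is a pure $n$-dimensional partite simplicial complex (vertex set partitioned into $V_0,\dots,V_n$, each $n$-simplex having one vertex in each $V_i$; $\mathrm{type}(\tau)=\{i:\tau\cap V_i\neq\emptyset\}$), gallery connected (any two $n$-simplices are joined by a sequence of $n$-simplices with consecutive ones sharing an $(n-1)$-face), with all $1$-dimensional links (links of $(n-2)$-simplices) connected finite graphs. $G$ is a locally compact unimodular group with Haar measure $\mu$ acting cocompactly on $X$ by type-preserving simplicial automorphisms, with $G_\tau$ open compact for every $\tau\in X(n-2)\cup X(n-1)\cup X(n)$; $\pi$ is a strongly continuous representation of $G$ on a Banach space $\mathbb{E}$. $D(n)$ is a set of representatives of the $G$-orbits on $X(n)$. $C(X(n),\pi)$ is the space of maps $\phi:X(n)\to\mathbb{E}$ with $\phi(g.\sigma)=\pi(g)\phi(\sigma)$ for all $g,\sigma$, normed by $\|\phi\|^2=\sum_{\sigma\in D(n)}\frac{1}{\mu(G_\sigma)}|\phi(\sigma)|^2$. For $\nu\subseteq\{0,\dots,n\}$ with $|\nu|\in\{n-1,n\}$, write $\sigma\sim_\nu\sigma'$ if there is a simplex $\tau\subseteq\sigma\cap\sigma'$ with $\mathrm{type}(\tau)=\nu$, and define $P^\pi_\nu\phi(\sigma)=\frac{1}{|\{\sigma':\sigma'\sim_\nu\sigma\}|}\sum_{\sigma'\sim_\nu\sigma}\phi(\sigma')$,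 a projection on $C(X(n),\pi)$. *)

theory Defs
  imports "HOL-Analysis.Analysis" "HOL-Algebra.Group_Action"
begin

definition simplicial_complex :: "'v set set \<Rightarrow> bool" where
  "simplicial_complex X \<longleftrightarrow>
     (\<forall>\<sigma>\<in>X. finite \<sigma> \<and> \<sigma> \<noteq> {}) \<and>
     (\<forall>\<sigma>\<in>X. \<forall>\<tau>. \<tau> \<subseteq> \<sigma> \<and> \<tau> \<noteq> {} \<longrightarrow> \<tau> \<in> X)"

definition simp :: "'v set set \<Rightarrow> nat \<Rightarrow> 'v set set" where
  "simp X k = {\<sigma>\<in>X. card \<sigma> = k + 1}"

definition vertices :: "'v set set \<Rightarrow> 'v set" where
  "vertices X = \<Union>X"

definition pure_complex :: "nat \<Rightarrow> 'v set set \<Rightarrow> bool" where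
  "pure_complex n X \<longleftrightarrow> simplicial_complex X \<and>
     (\<forall>\<sigma>\<in>X. \<exists>\<sigma>'\<in>simp X n. \<sigma> \<subseteq> \<sigma>') \<and> (\<forall>\<sigma>\<in>X. card \<sigma> \<le> n + 1)"

text \<open>Partite: the vertex set is partitioned into V_0,...,V_n via the colouring
  col (V_i = vertices of colour i), and every n-simplex has exactly one vertex
  in each V_i.\<close>
definition partite :: "nat \<Rightarrow> 'v set set \<Rightarrow> ('v \<Rightarrow> nat) \<Rightarrow> bool" where
  "partite n X col \<longleftrightarrow>
     (\<forall>v\<in>vertices X. col v \<le> n) \<and>
     (\<forall>\<sigma>\<in>simp X n. \<forall>i\<le>n. card {v\<in>\<sigma>. col v = i} = 1)"

definition type_of :: "('v \<Rightarrow> nat) \<Rightarrow> 'v set \<Rightarrow> nat set" where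
  "type_of col \<tau> = col ` \<tau>"

definition gallery_adj :: "nat \<Rightarrow> 'v set set \<Rightarrow> 'v set \<Rightarrow> 'v set \<Rightarrow> bool" where
  "gallery_adj n X \<sigma> \<sigma>' \<longleftrightarrow> \<sigma> \<in> simp X n \<and> \<sigma>' \<in> simp X n \<and> card (\<sigma> \<inter> \<sigma>') = n"

definition gallery_connected :: "nat \<Rightarrow> 'v set set \<Rightarrow> bool" where
  "gallery_connected n X \<longleftrightarrow>
     (\<forall>\<sigma>\<in>simp X n. \<forall>\<sigma>'\<in>simp X n. (gallery_adj n X)\<^sup>*\<^sup>* \<sigma> \<sigma>')"

definition link :: "'v set set \<Rightarrow> 'v set \<Rightarrow> 'v set set" where
  "link X \<rho> = {\<tau>\<in>X. \<tau> \<inter> \<rho> = {} \<and> \<tau> \<union> \<rho> \<in> X}"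

text \<open>A 1-dimensional link viewed as a graph: vertices are its 0-simplices,
  edges its 1-simplices. Connected finite graph.\<close>
definition link_adj :: "'v set set \<Rightarrow> 'v set \<Rightarrow> 'v \<Rightarrow> 'v \<Rightarrow> bool" where
  "link_adj X \<rho> u w \<longleftrightarrow> {u, w} \<in> link X \<rho> \<and> u \<noteq> w"

definition connected_finite_link :: "'v set set \<Rightarrow> 'v set \<Rightarrow> bool" where
  "connected_finite_link X \<rho> \<longleftrightarrow>
     finite (vertices (link X \<rho>)) \<and>
     (\<forall>u\<in>vertices (link X \<rho>). \<forall>w\<in>vertices (link X \<rho>). (link_adj X \<rho>)\<^sup>*\<^sup>* u w)"

definition topological_group :: "('g, 'b) monoid_scheme \<Rightarrow> 'g topology \<Rightarrow> bool" where
  "topological_group G T \<longleftrightarrow> group G \<and> topspace T = carrier G \<and>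
     continuous_map (prod_topology T T) T (\<lambda>(x, y). x \<otimes>\<^bsub>G\<^esub> y) \<and>
     continuous_map T T (\<lambda>x. inv\<^bsub>G\<^esub> x)"

definition locally_compact_group :: "('g, 'b) monoid_scheme \<Rightarrow> 'g topology \<Rightarrow> bool" where
  "locally_compact_group G T \<longleftrightarrow> topological_group G T \<and> Hausdorff_space T \<and>
     locally_compact_space T"

text \<open>A (left) Haar measure on G which is also right invariant, i.e. G is
  unimodular and mu is its Haar measure.\<close>
definition bi_invariant_haar_measure ::
    "('g, 'b) monoid_scheme \<Rightarrow> 'g topology \<Rightarrow> 'g measure \<Rightarrow> bool" where
  "bi_invariant_haar_measure G T \<mu> \<longleftrightarrow>
     space \<mu> = topspace T \<and>
     sets \<mu> = sigma_sets (topspace T) {U. openin T U} \<and>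
     (\<forall>K. compactin T K \<longrightarrow> emeasure \<mu> K < \<infinity>) \<and>
     (\<forall>U. openin T U \<and> U \<noteq> {} \<longrightarrow> emeasure \<mu> U > 0) \<and>
     (\<forall>K. compactin T K \<longrightarrow> emeasure \<mu> K = (INF U\<in>{U. openin T U \<and> K \<subseteq> U}. emeasure \<mu> U)) \<and>
     (\<forall>U. openin T U \<longrightarrow> emeasure \<mu> U = (SUP K\<in>{K. compactin T K \<and> K \<subseteq> U}. emeasure \<mu> K)) \<and>
     (\<forall>g\<in>carrier G. \<forall>A\<in>sets \<mu>.
        emeasure \<mu> ((\<lambda>h. g \<otimes>\<^bsub>G\<^esub> h) ` A) = emeasure \<mu> A \<and>
        emeasure \<mu> ((\<lambda>h. h \<otimes>\<^bsub>G\<^esub> g) ` A) = emeasure \<mu> A)"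

definition simplex_stabilizer :: "('g, 'b) monoid_scheme \<Rightarrow> ('g \<Rightarrow> 'v \<Rightarrow> 'v) \<Rightarrow> 'v set \<Rightarrow> 'g set" where
  "simplex_stabilizer G act \<tau> = {g\<in>carrier G. act g ` \<tau> = \<tau>}"

definition type_preserving_simplicial_action ::
    "('g, 'b) monoid_scheme \<Rightarrow> 'v set set \<Rightarrow> ('v \<Rightarrow> nat) \<Rightarrow> ('g \<Rightarrow> 'v \<Rightarrow> 'v) \<Rightarrow> bool" where
  "type_preserving_simplicial_action G X col act \<longleftrightarrow>
     group_action G (vertices X) act \<and>
     (\<forall>g\<in>carrier G. \<forall>\<sigma>\<in>X. act g ` \<sigma> \<in> X) \<and>
     (\<forall>g\<in>carrier G. \<forall>v\<in>vertices X. col (act g v) = col v)"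

definition cocompact_action :: "('g, 'b) monoid_scheme \<Rightarrow> 'v set set \<Rightarrow> ('g \<Rightarrow> 'v \<Rightarrow> 'v) \<Rightarrow> bool" where
  "cocompact_action G X act \<longleftrightarrow>
     finite {{act g ` \<sigma> | g. g \<in> carrier G} | \<sigma>. \<sigma> \<in> X}"

definition strongly_continuous_rep ::
    "('g, 'b) monoid_scheme \<Rightarrow> 'g topology \<Rightarrow> ('g \<Rightarrow> 'e::banach \<Rightarrow> 'e) \<Rightarrow> bool" where
  "strongly_continuous_rep G T \<pi> \<longleftrightarrow>
     (\<forall>g\<in>carrier G. bounded_linear (\<pi> g)) \<and>
     \<pi> \<one>\<^bsub>G\<^esub> = id \<and>
     (\<forall>g\<in>carrier G. \<forall>h\<in>carrier G. \<pi> (g \<otimes>\<^bsub>G\<^esub> h) = \<pi> g \<circ> \<pi> h) \<and>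
     (\<forall>x. continuous_map T euclidean (\<lambda>g. \<pi> g x))"

text \<open>Maps X(n) -> E are represented as functions on vertex sets that vanish
  outside X(n).\<close>
definition equivariant_maps ::
    "nat \<Rightarrow> 'v set set \<Rightarrow> ('g, 'b) monoid_scheme \<Rightarrow> ('g \<Rightarrow> 'v \<Rightarrow> 'v) \<Rightarrow> ('g \<Rightarrow> 'e::banach \<Rightarrow> 'e)
      \<Rightarrow> ('v set \<Rightarrow> 'e) set" where
  "equivariant_maps n X G act \<pi> =
     {\<phi>. (\<forall>\<sigma>. \<sigma> \<notin> simp X n \<longrightarrow> \<phi> \<sigma> = 0) \<and>
          (\<forall>g\<in>carrier G. \<forall>\<sigma>\<in>simp X n. \<phi> (act g ` \<sigma>) = \<pi> g (\<phi> \<sigma>))}"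

definition sim_nu :: "('v \<Rightarrow> nat) \<Rightarrow> nat set \<Rightarrow> 'v set \<Rightarrow> 'v set \<Rightarrow> bool" where
  "sim_nu col \<nu> \<sigma> \<sigma>' \<longleftrightarrow> (\<exists>\<tau>. \<tau> \<subseteq> \<sigma> \<inter> \<sigma>' \<and> type_of col \<tau> = \<nu>)"

definition P_op :: "nat \<Rightarrow> 'v set set \<Rightarrow> ('v \<Rightarrow> nat) \<Rightarrow> nat set \<Rightarrow> ('v set \<Rightarrow> 'e::banach)
      \<Rightarrow> ('v set \<Rightarrow> 'e)" where
  "P_op n X col \<nu> \<phi> = (\<lambda>\<sigma>. if \<sigma> \<in> simp X n then
      (1 / real (card {\<sigma>'\<in>simp X n. sim_nu col \<nu> \<sigma>' \<sigma>})) *\<^sub>R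
        (\<Sum>\<sigma>'\<in>{\<sigma>'\<in>simp X n. sim_nu col \<nu> \<sigma>' \<sigma>}. \<phi> \<sigma>')
     else 0)"

end

theory Submission
  imports Defs
begin

text \<open>
  In a partite complex an \<open>n\<close>-simplex \<open>\<sigma>\<close> has exactly one face of each type \<open>\<nu>\<close>, so
  \<open>\<sigma> \<sim>\<^sub>\<nu> \<sigma>'\<close> just says that \<open>\<sigma>\<close> and \<open>\<sigma>'\<close> have the same face of type \<open>\<nu>\<close>; it is an
  equivalence relation and \<open>P\<^sub>\<nu>\<close> averages over its classes. If \<open>\<sigma>, \<sigma>'\<close> share an
  \<open>(n-1)\<close>-face of type \<open>\<nu>\<close>, every \<open>P\<^sub>\<nu> \<psi>\<close> takes the same value on them. Hence a map in
  the image of all \<open>P\<^sub>\<nu>\<close>, \<open>|\<nu>| = n\<close>, is constant along galleries, hence constant; being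
  equivariant (each \<open>P\<^sub>\<nu>\<close> commutes with \<open>G\<close>), its value is fixed by \<open>\<pi>(G)\<close>. Conversely
  a constant map is fixed by each \<open>P\<^sub>\<nu>\<close>: the classes are finite because all of their
  members contain a common \<open>(n-2)\<close>-simplex, whose link is finite.
\<close>

definition typed_face :: "('v \<Rightarrow> nat) \<Rightarrow> 'v set \<Rightarrow> nat set \<Rightarrow> 'v set" where
  "typed_face col \<sigma> \<nu> = {v\<in>\<sigma>. col v \<in> \<nu>}"

definition sim_class :: "nat \<Rightarrow> 'v set set \<Rightarrow> ('v \<Rightarrow> nat) \<Rightarrow> nat set \<Rightarrow> 'v set \<Rightarrow> 'v set set" where
  "sim_class n X col \<nu> \<sigma> = {\<sigma>'\<in>simp X n. sim_nu col \<nu> \<sigma>' \<sigma>}"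

lemma simp_subset_vertices: "\<sigma> \<in> simp X k \<Longrightarrow> \<sigma> \<subseteq> vertices X"
  by (auto simp: simp_def vertices_def)

lemma simplicial_complex_face:
  assumes "simplicial_complex X" "\<sigma> \<in> X" "\<tau> \<subseteq> \<sigma>" "\<tau> \<noteq> {}"
  shows "\<tau> \<in> X"
  using assms unfolding simplicial_complex_def by blast

lemma simplex_subset_link_vertices:
  assumes X: "simplicial_complex X" and \<sigma>: "\<sigma> \<in> X" and \<rho>: "\<rho> \<subseteq> \<sigma>"
  shows "\<sigma> \<subseteq> \<rho> \<union> vertices (link X \<rho>)"
proof
  fix w assume w: "w \<in> \<sigma>"
  show "w \<in> \<rho> \<union> vertices (link X \<rho>)"
  proof (cases "w \<in> \<rho>")
    case False
    have "{w} \<in> X" "{w} \<union> \<rho> \<in> X"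
      using simplicial_complex_face[OF X \<sigma>] w \<rho> by auto
    with False have "{w} \<in> link X \<rho>" by (auto simp: link_def)
    then show ?thesis by (auto simp: vertices_def)
  qed simp
qed

lemma finite_simplices_containing:
  assumes "simplicial_complex X" "finite \<rho>" "finite (vertices (link X \<rho>))"
  shows "finite {\<sigma>\<in>X. \<rho> \<subseteq> \<sigma>}"
proof (rule finite_subset)
  show "{\<sigma>\<in>X. \<rho> \<subseteq> \<sigma>} \<subseteq> Pow (\<rho> \<union> vertices (link X \<rho>))"
    using simplex_subset_link_vertices[OF assms(1)] by blast
qed (use assms in simp)

lemma partite_inj_on_col:
  assumes "partite n X col" "\<sigma> \<in> simp X n"
  shows "inj_on col \<sigma>"
proof (rule inj_onI)
  fix x y assume xy: "x \<in> \<sigma>" "y \<in> \<sigma>" "col x = col y"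
  have "col x \<le> n"
    using assms xy simp_subset_vertices by (fastforce simp: partite_def)
  then have "card {v\<in>\<sigma>. col v = col x} = 1" using assms by (auto simp: partite_def)
  then obtain z where "{v\<in>\<sigma>. col v = col x} = {z}" by (rule card_1_singletonE)
  with xy show "x = y" by (metis (mono_tags, lifting) mem_Collect_eq singletonD)
qed

lemma type_of_typed_face:
  assumes "partite n X col" "\<sigma> \<in> simp X n" "\<nu> \<subseteq> {0..n}"
  shows "type_of col (typed_face col \<sigma> \<nu>) = \<nu>"
proof
  show "\<nu> \<subseteq> type_of col (typed_face col \<sigma> \<nu>)"
  proof
    fix i assume i: "i \<in> \<nu>"
    with assms have "card {v\<in>\<sigma>. col v = i} = 1" by (auto simp: partite_def)
    with i show "i \<in> type_of col (typed_face col \<sigma> \<nu>)"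
      by (force simp: card_1_singleton_iff type_of_def typed_face_def)
  qed
qed (auto simp: type_of_def typed_face_def)

lemma card_typed_face:
  assumes "partite n X col" "\<sigma> \<in> simp X n" "\<nu> \<subseteq> {0..n}"
  shows "card (typed_face col \<sigma> \<nu>) = card \<nu>"
proof -
  have "inj_on col (typed_face col \<sigma> \<nu>)"
    using partite_inj_on_col[OF assms(1,2)] by (rule inj_on_subset) (auto simp: typed_face_def)
  then show ?thesis
    using type_of_typed_face[OF assms] by (metis card_image type_of_def)
qed

lemma sim_nu_iff_typed_face_eq:
  assumes "partite n X col" "\<sigma> \<in> simp X n" "\<sigma>' \<in> simp X n" "\<nu> \<subseteq> {0..n}"
  shows "sim_nu col \<nu> \<sigma>' \<sigma> \<longleftrightarrow> typed_face col \<sigma>' \<nu> = typed_face col \<sigma> \<nu>"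
proof
  have face_of_type: "\<tau> = typed_face col \<rho> \<nu>"
    if "\<rho> \<in> simp X n" "\<tau> \<subseteq> \<rho>" "type_of col \<tau> = \<nu>" for \<rho> \<tau>
    using partite_inj_on_col[OF assms(1) that(1)] that(2,3)
    by (auto simp: typed_face_def type_of_def inj_on_def)
  assume "sim_nu col \<nu> \<sigma>' \<sigma>"
  then obtain \<tau> where "\<tau> \<subseteq> \<sigma>' \<inter> \<sigma>" "type_of col \<tau> = \<nu>" by (auto simp: sim_nu_def)
  then show "typed_face col \<sigma>' \<nu> = typed_face col \<sigma> \<nu>"
    using face_of_type[OF assms(2)] face_of_type[OF assms(3)] by blast
next
  assume "typed_face col \<sigma>' \<nu> = typed_face col \<sigma> \<nu>"
  then have "typed_face col \<sigma> \<nu> \<subseteq> \<sigma>' \<inter> \<sigma>" by (auto simp: typed_face_def)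
  then show "sim_nu col \<nu> \<sigma>' \<sigma>"
    using type_of_typed_face[OF assms(1,2,4)] by (auto simp: sim_nu_def)
qed

lemma self_mem_sim_class:
  assumes "partite n X col" "\<sigma> \<in> simp X n" "\<nu> \<subseteq> {0..n}"
  shows "\<sigma> \<in> sim_class n X col \<nu> \<sigma>"
  using sim_nu_iff_typed_face_eq[OF assms(1,2,2,3)] assms(2) by (simp add: sim_class_def)

lemma sim_class_eq_if_sim_nu:
  assumes "partite n X col" "\<sigma> \<in> simp X n" "\<sigma>' \<in> simp X n" "\<nu> \<subseteq> {0..n}"
    and "sim_nu col \<nu> \<sigma>' \<sigma>"
  shows "sim_class n X col \<nu> \<sigma>' = sim_class n X col \<nu> \<sigma>"
  using assms sim_nu_iff_typed_face_eq[OF assms(1) _ _ assms(4)]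
  by (auto simp: sim_class_def)

lemma finite_sim_class:
  assumes "2 \<le> n" "simplicial_complex X" "partite n X col"
    and links: "\<forall>\<rho>\<in>simp X (n - 2). connected_finite_link X \<rho>"
    and \<sigma>: "\<sigma> \<in> simp X n" and \<nu>: "\<nu> \<subseteq> {0..n}" "card \<nu> = n"
  shows "finite (sim_class n X col \<nu> \<sigma>)"
proof -
  let ?\<tau> = "typed_face col \<sigma> \<nu>"
  have "\<sigma> \<in> X" "finite \<sigma>"
    using assms(2) \<sigma> by (auto simp: simp_def simplicial_complex_def)
  have "card ?\<tau> = n" using card_typed_face[OF assms(3) \<sigma> \<nu>(1)] \<nu>(2) by simp
  with assms(1) obtain t where t: "t \<in> ?\<tau>" by fastforce
  define \<rho> where "\<rho> = ?\<tau> - {t}"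
  have "\<rho> \<subseteq> \<sigma>" by (auto simp: \<rho>_def typed_face_def)
  then have "finite \<rho>" using \<open>finite \<sigma>\<close> by (rule finite_subset)
  have "card \<rho> = n - 1" using t \<open>card ?\<tau> = n\<close> by (simp add: \<rho>_def)
  with assms(1) have "\<rho> \<noteq> {}" by auto
  with \<open>card \<rho> = n - 1\<close> assms(1) have "\<rho> \<in> simp X (n - 2)"
    using simplicial_complex_face[OF assms(2) \<open>\<sigma> \<in> X\<close> \<open>\<rho> \<subseteq> \<sigma>\<close>] by (simp add: simp_def)
  with links have "finite (vertices (link X \<rho>))" by (simp add: connected_finite_link_def)
  then have "finite {\<sigma>'\<in>X. \<rho> \<subseteq> \<sigma>'}"
    using finite_simplices_containing[OF assms(2) \<open>finite \<rho>\<close>] by simp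
  moreover have "sim_class n X col \<nu> \<sigma> \<subseteq> {\<sigma>'\<in>X. \<rho> \<subseteq> \<sigma>'}"
  proof
    fix \<sigma>' assume "\<sigma>' \<in> sim_class n X col \<nu> \<sigma>"
    then have "\<sigma>' \<in> simp X n" "typed_face col \<sigma>' \<nu> = ?\<tau>"
      using sim_nu_iff_typed_face_eq[OF assms(3) \<sigma> _ \<nu>(1)] by (auto simp: sim_class_def)
    then show "\<sigma>' \<in> {\<sigma>'\<in>X. \<rho> \<subseteq> \<sigma>'}" by (auto simp: \<rho>_def typed_face_def simp_def)
  qed
  ultimately show ?thesis by (rule finite_subset[rotated])
qed

lemma P_op_simplex:
  "\<sigma> \<in> simp X n \<Longrightarrow> P_op n X col \<nu> \<phi> \<sigma> =
     (1 / real (card (sim_class n X col \<nu> \<sigma>))) *\<^sub>R (\<Sum>\<sigma>'\<in>sim_class n X col \<nu> \<sigma>. \<phi> \<sigma>')"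
  by (simp add: P_op_def sim_class_def)

lemma type_of_gallery_adj:
  assumes "partite n X col" "gallery_adj n X \<sigma> \<sigma>'"
  shows "type_of col (\<sigma> \<inter> \<sigma>') \<subseteq> {0..n}" "card (type_of col (\<sigma> \<inter> \<sigma>')) = n"
proof -
  have \<sigma>: "\<sigma> \<in> simp X n" and "card (\<sigma> \<inter> \<sigma>') = n" using assms(2) by (auto simp: gallery_adj_def)
  have "\<forall>v\<in>vertices X. col v \<le> n" using assms(1) by (simp add: partite_def)
  with simp_subset_vertices[OF \<sigma>] show "type_of col (\<sigma> \<inter> \<sigma>') \<subseteq> {0..n}"
    by (auto simp: type_of_def)
  have "inj_on col (\<sigma> \<inter> \<sigma>')" using partite_inj_on_col[OF assms(1) \<sigma>] by (rule inj_on_subset) blast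
  with \<open>card (\<sigma> \<inter> \<sigma>') = n\<close> show "card (type_of col (\<sigma> \<inter> \<sigma>')) = n"
    by (simp add: type_of_def card_image)
qed

lemma P_op_gallery_adj_eq:
  assumes "partite n X col" "gallery_adj n X \<sigma> \<sigma>'"
  shows "P_op n X col (type_of col (\<sigma> \<inter> \<sigma>')) \<psi> \<sigma> = P_op n X col (type_of col (\<sigma> \<inter> \<sigma>')) \<psi> \<sigma>'"
proof -
  have \<sigma>: "\<sigma> \<in> simp X n" "\<sigma>' \<in> simp X n" using assms(2) by (auto simp: gallery_adj_def)
  have "sim_nu col (type_of col (\<sigma> \<inter> \<sigma>')) \<sigma>' \<sigma>" by (auto simp: sim_nu_def)
  then show ?thesis
    using sim_class_eq_if_sim_nu[OF assms(1) \<sigma> type_of_gallery_adj(1)[OF assms]]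
    by (simp add: P_op_simplex \<sigma>)
qed

lemma gallery_connected_const:
  assumes "gallery_connected n X" "\<And>\<sigma> \<sigma>'. gallery_adj n X \<sigma> \<sigma>' \<Longrightarrow> f \<sigma> = f \<sigma>'"
    and "\<sigma> \<in> simp X n" "\<sigma>' \<in> simp X n"
  shows "f \<sigma> = f \<sigma>'"
proof -
  have "(gallery_adj n X)\<^sup>*\<^sup>* \<sigma> \<sigma>'" using assms(1,3,4) by (simp add: gallery_connected_def)
  then show ?thesis by induction (use assms(2) in simp_all)
qed

lemma act_image_simp:
  assumes "type_preserving_simplicial_action G X col act" "g \<in> carrier G" "\<sigma> \<in> simp X n"
  shows "act g ` \<sigma> \<in> simp X n"
proof -
  have "inj_on (act g) \<sigma>"
    using assms group_action.inj_prop simp_subset_vertices inj_on_subset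
    unfolding type_preserving_simplicial_action_def by metis
  with assms show ?thesis
    by (auto simp: type_preserving_simplicial_action_def simp_def card_image)
qed

lemma (in group_action) inv_image_image:
  assumes "g \<in> carrier G" "A \<subseteq> E"
  shows "\<phi> (inv g) ` \<phi> g ` A = A"
proof -
  have "\<phi> (inv g) (\<phi> g x) = x" if "x \<in> A" for x
    using assms(2) that by (intro orbit_sym_aux[OF assms(1)]) auto
  then show ?thesis by (simp add: image_image)
qed

lemma sim_nu_act_image:
  assumes "type_preserving_simplicial_action G X col act" "g \<in> carrier G"
    and "\<sigma> \<subseteq> vertices X" "\<sigma>' \<subseteq> vertices X" "sim_nu col \<nu> \<sigma> \<sigma>'"
  shows "sim_nu col \<nu> (act g ` \<sigma>) (act g ` \<sigma>')"
proof -
  obtain \<tau> where \<tau>: "\<tau> \<subseteq> \<sigma> \<inter> \<sigma>'" "type_of col \<tau> = \<nu>"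
    using assms(5) by (auto simp: sim_nu_def)
  have "col (act g v) = col v" if "v \<in> \<tau>" for v
    using assms(1-3) \<tau>(1) that by (auto simp: type_preserving_simplicial_action_def)
  then have "type_of col (act g ` \<tau>) = \<nu>"
    using \<tau>(2) by (simp add: type_of_def image_image)
  moreover have "act g ` \<tau> \<subseteq> act g ` \<sigma> \<inter> act g ` \<sigma>'" using \<tau>(1) by blast
  ultimately show ?thesis unfolding sim_nu_def by blast
qed

lemma sim_class_act_image:
  assumes A: "type_preserving_simplicial_action G X col act" and g: "g \<in> carrier G"
    and \<sigma>: "\<sigma> \<in> simp X n"
  shows "sim_class n X col \<nu> (act g ` \<sigma>) = (\<lambda>\<sigma>'. act g ` \<sigma>') ` sim_class n X col \<nu> \<sigma>"
proof -
  have ga: "group_action G (vertices X) act"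
    using A by (simp add: type_preserving_simplicial_action_def)
  then have grp: "group G" by (simp add: group_action_def group_hom_def)
  have image_mem: "act h ` \<sigma>' \<in> sim_class n X col \<nu> (act h ` \<rho>)"
    if "h \<in> carrier G" "\<rho> \<in> simp X n" "\<sigma>' \<in> sim_class n X col \<nu> \<rho>" for h \<rho> \<sigma>'
  proof -
    have \<sigma>': "\<sigma>' \<in> simp X n" "sim_nu col \<nu> \<sigma>' \<rho>" using that(3) by (simp_all add: sim_class_def)
    have "sim_nu col \<nu> (act h ` \<sigma>') (act h ` \<rho>)"
      by (rule sim_nu_act_image[OF A that(1) simp_subset_vertices simp_subset_vertices])
        (use \<sigma>' that(2) in auto)
    then show ?thesis using act_image_simp[OF A that(1) \<sigma>'(1)] by (simp add: sim_class_def)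
  qed
  show ?thesis
  proof (intro equalityI subsetI)
    fix \<sigma>' assume \<sigma>': "\<sigma>' \<in> sim_class n X col \<nu> (act g ` \<sigma>)"
    then have "\<sigma>' \<subseteq> vertices X" using simp_subset_vertices[of \<sigma>' X n] by (simp add: sim_class_def)
    then have "\<sigma>' = act g ` act (inv\<^bsub>G\<^esub> g) ` \<sigma>'"
      using group_action.inv_image_image[OF ga group.inv_closed[OF grp g]] group.inv_inv[OF grp g]
      by simp
    moreover have "act (inv\<^bsub>G\<^esub> g) ` \<sigma>' \<in> sim_class n X col \<nu> \<sigma>"
      using image_mem[OF group.inv_closed[OF grp g] act_image_simp[OF A g \<sigma>] \<sigma>']
        group_action.inv_image_image[OF ga g simp_subset_vertices[OF \<sigma>]]
      by simp
    ultimately show "\<sigma>' \<in> (\<lambda>\<sigma>'. act g ` \<sigma>') ` sim_class n X col \<nu> \<sigma>" by blast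
  qed (use image_mem[OF g \<sigma>] in blast)
qed

lemma equivariant_maps_outside:
  "\<phi> \<in> equivariant_maps n X G act \<pi> \<Longrightarrow> \<sigma> \<notin> simp X n \<Longrightarrow> \<phi> \<sigma> = 0"
  by (simp add: equivariant_maps_def)

lemma equivariant_maps_act:
  "\<phi> \<in> equivariant_maps n X G act \<pi> \<Longrightarrow> g \<in> carrier G \<Longrightarrow> \<sigma> \<in> simp X n \<Longrightarrow>
    \<phi> (act g ` \<sigma>) = \<pi> g (\<phi> \<sigma>)"
  by (simp add: equivariant_maps_def)

lemma P_op_equivariant:
  assumes A: "type_preserving_simplicial_action G X col act"
    and lin: "\<forall>g\<in>carrier G. linear (\<pi> g)" and \<psi>: "\<psi> \<in> equivariant_maps n X G act \<pi>"
  shows "P_op n X col \<nu> \<psi> \<in> equivariant_maps n X G act \<pi>"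
  \<comment> \<open>No finiteness of the classes is needed: for an infinite class both sides are \<open>0\<close>.\<close>
proof -
  have "P_op n X col \<nu> \<psi> (act g ` \<sigma>) = \<pi> g (P_op n X col \<nu> \<psi> \<sigma>)"
    if g: "g \<in> carrier G" and \<sigma>: "\<sigma> \<in> simp X n" for g \<sigma>
  proof -
    let ?C = "sim_class n X col \<nu> \<sigma>"
    have "inj_on (act g) (vertices X)"
      using A g group_action.inj_prop by (auto simp: type_preserving_simplicial_action_def)
    moreover have "?C \<subseteq> Pow (vertices X)"
      using simp_subset_vertices by (auto simp: sim_class_def)
    ultimately have "inj_on (\<lambda>\<sigma>'. act g ` \<sigma>') ?C"
      using inj_on_image_Pow inj_on_subset by blast
    then have "card (sim_class n X col \<nu> (act g ` \<sigma>)) = card ?C"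
      and "(\<Sum>\<sigma>'\<in>sim_class n X col \<nu> (act g ` \<sigma>). \<psi> \<sigma>') = (\<Sum>\<sigma>'\<in>?C. \<psi> (act g ` \<sigma>'))"
      using sim_class_act_image[OF A g \<sigma>] by (simp_all add: card_image sum.reindex)
    moreover have "(\<Sum>\<sigma>'\<in>?C. \<psi> (act g ` \<sigma>')) = \<pi> g (\<Sum>\<sigma>'\<in>?C. \<psi> \<sigma>')"
      using equivariant_maps_act[OF \<psi> g] g lin by (simp add: sim_class_def real_vector.linear_sum)
    ultimately show ?thesis
      using act_image_simp[OF A g \<sigma>] \<sigma> lin g by (simp add: P_op_simplex real_vector.linear_scale)
  qed
  then show ?thesis by (simp add: equivariant_maps_def P_op_def)
qed

lemma const_map_in_equivariant_maps:
  assumes "type_preserving_simplicial_action G X col act" "\<forall>g\<in>carrier G. \<pi> g x0 = x0"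
  shows "(\<lambda>\<sigma>. if \<sigma> \<in> simp X n then x0 else 0) \<in> equivariant_maps n X G act \<pi>"
  using assms act_image_simp[OF assms(1)] by (simp add: equivariant_maps_def)

lemma const_equivariant_mapE:
  assumes A: "type_preserving_simplicial_action G X col act"
    and lin: "\<forall>g\<in>carrier G. linear (\<pi> g)" and \<phi>: "\<phi> \<in> equivariant_maps n X G act \<pi>"
    and const: "\<And>\<sigma> \<sigma>'. \<sigma> \<in> simp X n \<Longrightarrow> \<sigma>' \<in> simp X n \<Longrightarrow> \<phi> \<sigma> = \<phi> \<sigma>'"
  obtains x0 where "\<forall>g\<in>carrier G. \<pi> g x0 = x0" "\<phi> = (\<lambda>\<sigma>. if \<sigma> \<in> simp X n then x0 else 0)"
proof (cases "simp X n = {}")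
  case True
  with \<phi> have "\<phi> = (\<lambda>\<sigma>. if \<sigma> \<in> simp X n then 0 else 0)"
    by (auto simp: equivariant_maps_def)
  with lin show ?thesis by (intro that[of 0]) (simp_all add: real_vector.linear_0)
next
  case False
  then obtain \<sigma>0 where \<sigma>0: "\<sigma>0 \<in> simp X n" by blast
  have "\<pi> g (\<phi> \<sigma>0) = \<phi> \<sigma>0" if g: "g \<in> carrier G" for g
  proof -
    have "\<pi> g (\<phi> \<sigma>0) = \<phi> (act g ` \<sigma>0)" using equivariant_maps_act[OF \<phi> g \<sigma>0] ..
    also have "\<dots> = \<phi> \<sigma>0" using const act_image_simp[OF A g \<sigma>0] \<sigma>0 by blast
    finally show ?thesis .
  qed
  moreover have "\<phi> = (\<lambda>\<sigma>. if \<sigma> \<in> simp X n then \<phi> \<sigma>0 else 0)"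
  proof
    fix \<sigma>
    show "\<phi> \<sigma> = (if \<sigma> \<in> simp X n then \<phi> \<sigma>0 else 0)"
    proof (cases "\<sigma> \<in> simp X n")
      case True
      then have "\<phi> \<sigma> = \<phi> \<sigma>0" using const \<sigma>0 by blast
      with True show ?thesis by simp
    next
      case False
      with equivariant_maps_outside[OF \<phi> False] show ?thesis by simp
    qed
  qed
  ultimately show ?thesis using that[of "\<phi> \<sigma>0"] by blast
qed

lemma P_op_const_map:
  assumes "partite n X col" "\<nu> \<subseteq> {0..n}"
    and "\<And>\<sigma>. \<sigma> \<in> simp X n \<Longrightarrow> finite (sim_class n X col \<nu> \<sigma>)"
  shows "P_op n X col \<nu> (\<lambda>\<sigma>. if \<sigma> \<in> simp X n then x0 else 0) = (\<lambda>\<sigma>. if \<sigma> \<in> simp X n then x0 else 0)"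
proof
  fix \<sigma>
  show "P_op n X col \<nu> (\<lambda>\<sigma>. if \<sigma> \<in> simp X n then x0 else 0) \<sigma> = (if \<sigma> \<in> simp X n then x0 else 0)"
  proof (cases "\<sigma> \<in> simp X n")
    case True
    let ?C = "sim_class n X col \<nu> \<sigma>"
    have "card ?C \<noteq> 0"
      using assms(3) self_mem_sim_class[OF assms(1) True assms(2)] True card_0_eq by blast
    have "(\<Sum>\<sigma>'\<in>?C. if \<sigma>' \<in> simp X n then x0 else 0) = (\<Sum>\<sigma>'\<in>?C. x0)"
      by (rule sum.cong) (simp_all add: sim_class_def)
    also have "\<dots> = real (card ?C) *\<^sub>R x0" by (rule sum_constant_scaleR)
    finally show ?thesis using True \<open>card ?C \<noteq> 0\<close> by (simp add: P_op_simplex)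
  qed (simp add: P_op_def)
qed

lemma P_op_images_constE:
  assumes part: "partite n X col" and gal: "gallery_connected n X"
    and A: "type_preserving_simplicial_action G X col act" and lin: "\<forall>g\<in>carrier G. linear (\<pi> g)"
    and \<phi>_image: "\<And>\<nu>. \<nu> \<subseteq> {0..n} \<Longrightarrow> card \<nu> = n \<Longrightarrow> \<phi> \<in> P_op n X col \<nu> ` equivariant_maps n X G act \<pi>"
  obtains x0 where "\<forall>g\<in>carrier G. \<pi> g x0 = x0" "\<phi> = (\<lambda>\<sigma>. if \<sigma> \<in> simp X n then x0 else 0)"
proof (rule const_equivariant_mapE[OF A lin])
  obtain \<psi> where "\<psi> \<in> equivariant_maps n X G act \<pi>" "\<phi> = P_op n X col {0..<n} \<psi>"
    using \<phi>_image[of "{0..<n}"] by (auto simp: subset_eq)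
  then show "\<phi> \<in> equivariant_maps n X G act \<pi>" using P_op_equivariant[OF A lin] by simp
next
  fix \<sigma> \<sigma>' assume "\<sigma> \<in> simp X n" "\<sigma>' \<in> simp X n"
  then show "\<phi> \<sigma> = \<phi> \<sigma>'"
  proof (rule gallery_connected_const[OF gal, rotated])
    fix \<sigma> \<sigma>' assume adj: "gallery_adj n X \<sigma> \<sigma>'"
    then obtain \<psi> where "\<phi> = P_op n X col (type_of col (\<sigma> \<inter> \<sigma>')) \<psi>"
      using \<phi>_image type_of_gallery_adj[OF part] by blast
    then show "\<phi> \<sigma> = \<phi> \<sigma>'" using P_op_gallery_adj_eq[OF part adj] by simp
  qed
qed (rule that)

theorem lemma3p5:
  fixes n :: nat
    and X :: "'v set set" and col :: "'v \<Rightarrow> nat"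
    and G :: "('g, 'b) monoid_scheme" and T :: "'g topology" and \<mu> :: "'g measure"
    and act :: "'g \<Rightarrow> 'v \<Rightarrow> 'v" and \<pi> :: "'g \<Rightarrow> 'e::banach \<Rightarrow> 'e"
  assumes "2 \<le> n"
    and "pure_complex n X" and "partite n X col"
    and "gallery_connected n X"
    and "\<forall>\<rho>\<in>simp X (n - 2). connected_finite_link X \<rho>"
    and "locally_compact_group G T" and "bi_invariant_haar_measure G T \<mu>"
    and "type_preserving_simplicial_action G X col act"
    and "cocompact_action G X act"
    and "\<forall>\<tau>\<in>simp X (n - 2) \<union> simp X (n - 1) \<union> simp X n.
           openin T (simplex_stabilizer G act \<tau>) \<and> compactin T (simplex_stabilizer G act \<tau>)"
    and "strongly_continuous_rep G T \<pi>"
  shows "(\<Inter>\<nu>\<in>{\<nu>. \<nu> \<subseteq> {0..n} \<and> card \<nu> = n}. P_op n X col \<nu> ` equivariant_maps n X G act \<pi>)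
       = {\<phi>. \<exists>x0. (\<forall>g\<in>carrier G. \<pi> g x0 = x0) \<and>
                  \<phi> = (\<lambda>\<sigma>. if \<sigma> \<in> simp X n then x0 else 0)}"
proof (intro equalityI subsetI)
  have lin: "\<forall>g\<in>carrier G. linear (\<pi> g)"
    using assms(11) by (simp add: strongly_continuous_rep_def bounded_linear.linear)
  fix \<phi> assume "\<phi> \<in> (\<Inter>\<nu>\<in>{\<nu>. \<nu> \<subseteq> {0..n} \<and> card \<nu> = n}. P_op n X col \<nu> ` equivariant_maps n X G act \<pi>)"
  then have "\<phi> \<in> P_op n X col \<nu> ` equivariant_maps n X G act \<pi>" if "\<nu> \<subseteq> {0..n}" "card \<nu> = n" for \<nu>
    using that by blast
  then obtain x0 where "\<forall>g\<in>carrier G. \<pi> g x0 = x0" "\<phi> = (\<lambda>\<sigma>. if \<sigma> \<in> simp X n then x0 else 0)"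
    by (rule P_op_images_constE[OF assms(3,4,8) lin])
  then show "\<phi> \<in> {\<phi>. \<exists>x0. (\<forall>g\<in>carrier G. \<pi> g x0 = x0) \<and> \<phi> = (\<lambda>\<sigma>. if \<sigma> \<in> simp X n then x0 else 0)}"
    by blast
next
  fix \<phi> assume "\<phi> \<in> {\<phi>. \<exists>x0. (\<forall>g\<in>carrier G. \<pi> g x0 = x0) \<and> \<phi> = (\<lambda>\<sigma>. if \<sigma> \<in> simp X n then x0 else 0)}"
  then obtain x0 where x0: "\<forall>g\<in>carrier G. \<pi> g x0 = x0" and \<phi>: "\<phi> = (\<lambda>\<sigma>. if \<sigma> \<in> simp X n then x0 else 0)"
    by blast
  have "simplicial_complex X" using assms(2) by (simp add: pure_complex_def)
  then have fixed: "P_op n X col \<nu> \<phi> = \<phi>" if "\<nu> \<subseteq> {0..n}" "card \<nu> = n" for \<nu>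
    unfolding \<phi> using finite_sim_class[OF assms(1) _ assms(3,5) _ that]
    by (intro P_op_const_map[OF assms(3) that(1)])
  have "\<phi> \<in> equivariant_maps n X G act \<pi>"
    unfolding \<phi> by (rule const_map_in_equivariant_maps[where \<pi> = \<pi>, OF assms(8) x0])
  with fixed show "\<phi> \<in> (\<Inter>\<nu>\<in>{\<nu>. \<nu> \<subseteq> {0..n} \<and> card \<nu> = n}. P_op n X col \<nu> ` equivariant_maps n X G act \<pi>)"
    by (auto intro: image_eqI[OF sym])
qed

end
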